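(* If the ISU decomposition of $R(t)-R(0)$ (with respect to $(\mathcal{T}_n(t))_{n\in\mathbb{N}}$) is independent of the update order, i.e. there is $(D_1(t),\ldots,D_m(t))$ with $D^{\pi}_{\pi(i)}(t)=D_i(t)$ for all $i$ and all $\pi\in\sigma_m$, then the ISU decomposition (for each update order), the ceteris paribus effects of the IOAT decomposition, and the averaged ISU decomposition all coincide and equal $(D_1(t),\ldots,D_m(t))$; moreover the IOAT interaction effect is zero.
   Context: Let $(\Omega,\mathcal{A},\mathbb{P})$ be a complete probability space with a right-continuous complete filtration. Let $X=(X_1,\ldots,X_m)$ be an adapted multivariate process (risk basis), $X^t$ the process stopped at $t$, and let $R(t)=\varrho(X^t)$, $t\ge 0$, for a mapping $\varrho$. Define the revaluation surplus surface $U(t_1,\ldots,t_m)=\varrho((X_1^{t_1},\ldots,X_m^{t_m}))$, so $R(t)=U(t,\ldots,t)$. For a partition $\mathcal{T}(t)=\{0=t_0<\cdots<t_k=t\}$, the SU (sequential updating) decomposition of $R(t)-R(0)$ is $D_i(t)=\sum_{l=0}^{k-1}\big(U(t_{l+1},\ldots,t_{l+1},t_l,\ldots,t_l)-U(t_{l+1},\ldots,t_{l+1},t_l,t_l,\ldots,t_l)\big)$, where in the first term the first $i$ arguments equal $t_{l+1}$ and in the second term the first $i-1$ arguments equal $t_{l+1}$ (rest equal $t_l$); i.e. risk factors are updated in the order $1,\ldots,m$. An update order is a permutation $\pi\in\sigma_m$ (the set of all permutations of $\{1,\ldots,m\}$), meaning the factors are updated in the order given by $\pi$ instead. For a sequence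 of partitions $\mathcal{T}_n(t)$ of $[0,t]$ with vanishing mesh, the ISU (infinitesimal sequential updating) decomposition $D(t)$ is the componentwise limit in probability of the SU decompositions w.r.t. $\mathcal{T}_n(t)$; $D^{\pi}(t)=(D^\pi_1(t),\ldots,D^\pi_m(t))$ denotes the ISU decomposition for update order $\pi$. The OAT (one-at-a-time) decomposition w.r.t. $\mathcal{T}(t)$ is $(D_1(t),\ldots,D_m(t),\overline{D}(t))$ with ceteris paribus effects $D_i(t)=\sum_{l=0}^{k-1}\big(U(t_l,\ldots,t_l,t_{l+1},t_l,\ldots,t_l)-U(t_l,\ldots,t_l)\big)$ ($t_{l+1}$ in the $i$-th argument only) and interaction effect $\overline{D}(t)=R(t)-R(0)-\sum_{i=1}^m D_i(t)$; the IOAT decomposition is the componentwise limit in probability of the OAT decompositions along $\mathcal{T}_n(t)$. The averaged ISU decomposition is $D_i(t)=\frac{1}{m!}\sum_{\pi\in\sigma_m}D^\pi_{\pi(i)}(t)$, $i=1,\ldots,m$. It was previously shown that the ISU decomposition is independent of update order iff for each update order it equals the ceteris paribus effects of the IOAT decomposition, in which case the interaction effect is zero. *)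

theory Defs
  imports "HOL-Probability.Probability"
begin

definition complete_prob_space :: "'a measure \<Rightarrow> bool" where
  "complete_prob_space M \<longleftrightarrow> prob_space M \<and>
     (\<forall>A B. B \<in> null_sets M \<longrightarrow> A \<subseteq> B \<longrightarrow> A \<in> sets M)"

definition rc_complete_filtration :: "'a measure \<Rightarrow> (real \<Rightarrow> 'a measure) \<Rightarrow> bool" where
  "rc_complete_filtration M F \<longleftrightarrow>
     (\<forall>s\<ge>0. space (F s) = space M \<and> sets (F s) \<subseteq> sets M) \<and>
     (\<forall>s r. 0 \<le> s \<longrightarrow> s \<le> r \<longrightarrow> sets (F s) \<subseteq> sets (F r)) \<and>
     (\<forall>s\<ge>0. sets (F s) = (\<Inter>r\<in>{s<..}. sets (F r))) \<and>
     null_sets M \<subseteq> sets (F 0)"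

definition adapted :: "(real \<Rightarrow> 'a measure) \<Rightarrow> nat \<Rightarrow> (nat \<Rightarrow> real \<Rightarrow> 'a \<Rightarrow> real) \<Rightarrow> bool" where
  "adapted F m X \<longleftrightarrow> (\<forall>i\<in>{1..m}. \<forall>s\<ge>0. X i s \<in> borel_measurable (F s))"

definition stopped :: "(real \<Rightarrow> 'a \<Rightarrow> real) \<Rightarrow> real \<Rightarrow> real \<Rightarrow> 'a \<Rightarrow> real" where
  "stopped Y t = (\<lambda>s \<omega>. Y (min s t) \<omega>)"

text \<open>U(s_1,...,s_m) = rho((X_1^{s_1},...,X_m^{s_m})); components outside 1..m are
  filled with the zero process (they carry no information).\<close>
definition surface ::
  "((nat \<Rightarrow> real \<Rightarrow> 'a \<Rightarrow> real) \<Rightarrow> 'a \<Rightarrow> real) \<Rightarrow> nat \<Rightarrow> (nat \<Rightarrow> real \<Rightarrow> 'a \<Rightarrow> real)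
     \<Rightarrow> (nat \<Rightarrow> real) \<Rightarrow> 'a \<Rightarrow> real" where
  "surface \<rho> m X s = \<rho> (\<lambda>j. if j \<in> {1..m} then stopped (X j) (s j) else (\<lambda>_ _. 0))"

definition R_proc ::
  "((nat \<Rightarrow> real \<Rightarrow> 'a \<Rightarrow> real) \<Rightarrow> 'a \<Rightarrow> real) \<Rightarrow> nat \<Rightarrow> (nat \<Rightarrow> real \<Rightarrow> 'a \<Rightarrow> real)
     \<Rightarrow> real \<Rightarrow> 'a \<Rightarrow> real" where
  "R_proc \<rho> m X t = surface \<rho> m X (\<lambda>_. t)"

definition is_partition :: "real \<Rightarrow> nat \<Rightarrow> (nat \<Rightarrow> real) \<Rightarrow> bool" where
  "is_partition t k p \<longleftrightarrow> p 0 = 0 \<and> p k = t \<and> (\<forall>l<k. p l < p (Suc l))"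

definition mesh :: "nat \<Rightarrow> (nat \<Rightarrow> real) \<Rightarrow> real" where
  "mesh k p = (if k = 0 then 0 else Max ((\<lambda>l. p (Suc l) - p l) ` {..<k}))"

text \<open>Update order pi (a permutation of {1..m}): factor i is updated in step pi i.
  upd_vec pi a b k: factors updated in steps 1..k are at time b, the others at time a.\<close>
definition upd_vec :: "(nat \<Rightarrow> nat) \<Rightarrow> real \<Rightarrow> real \<Rightarrow> nat \<Rightarrow> nat \<Rightarrow> real" where
  "upd_vec \<pi> a b k = (\<lambda>j. if \<pi> j \<le> k then b else a)"

text \<open>k-th component D^pi_k of the SU decomposition for update order pi w.r.t. the
  partition (k-point) p; it is the effect of the factor updated in step k.
  For pi = id this is exactly the SU decomposition of the paper.\<close>
definition SU ::
  "((nat \<Rightarrow> real \<Rightarrow> 'a \<Rightarrow> real) \<Rightarrow> 'a \<Rightarrow> real) \<Rightarrow> nat \<Rightarrow> (nat \<Rightarrow> real \<Rightarrow> 'a \<Rightarrow> real)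
     \<Rightarrow> (nat \<Rightarrow> nat) \<Rightarrow> nat \<Rightarrow> (nat \<Rightarrow> real) \<Rightarrow> nat \<Rightarrow> 'a \<Rightarrow> real" where
  "SU \<rho> m X \<pi> K p k = (\<lambda>\<omega>. \<Sum>l<K.
      surface \<rho> m X (upd_vec \<pi> (p l) (p (Suc l)) k) \<omega>
    - surface \<rho> m X (upd_vec \<pi> (p l) (p (Suc l)) (k - 1)) \<omega>)"

definition OAT ::
  "((nat \<Rightarrow> real \<Rightarrow> 'a \<Rightarrow> real) \<Rightarrow> 'a \<Rightarrow> real) \<Rightarrow> nat \<Rightarrow> (nat \<Rightarrow> real \<Rightarrow> 'a \<Rightarrow> real)
     \<Rightarrow> nat \<Rightarrow> (nat \<Rightarrow> real) \<Rightarrow> nat \<Rightarrow> 'a \<Rightarrow> real" where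
  "OAT \<rho> m X K p i = (\<lambda>\<omega>. \<Sum>l<K.
      surface \<rho> m X (\<lambda>j. if j = i then p (Suc l) else p l) \<omega>
    - surface \<rho> m X (\<lambda>j. p l) \<omega>)"

definition OAT_interaction ::
  "((nat \<Rightarrow> real \<Rightarrow> 'a \<Rightarrow> real) \<Rightarrow> 'a \<Rightarrow> real) \<Rightarrow> nat \<Rightarrow> (nat \<Rightarrow> real \<Rightarrow> 'a \<Rightarrow> real)
     \<Rightarrow> real \<Rightarrow> nat \<Rightarrow> (nat \<Rightarrow> real) \<Rightarrow> 'a \<Rightarrow> real" where
  "OAT_interaction \<rho> m X t K p = (\<lambda>\<omega>.
      R_proc \<rho> m X t \<omega> - R_proc \<rho> m X 0 \<omega> - (\<Sum>i\<in>{1..m}. OAT \<rho> m X K p i \<omega>))"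

definition conv_in_prob :: "'a measure \<Rightarrow> (nat \<Rightarrow> 'a \<Rightarrow> real) \<Rightarrow> ('a \<Rightarrow> real) \<Rightarrow> bool" where
  "conv_in_prob M Y Z \<longleftrightarrow> Z \<in> borel_measurable M \<and>
     (\<forall>e>0. (\<lambda>n. measure M {\<omega> \<in> space M. e < \<bar>Y n \<omega> - Z \<omega>\<bar>}) \<longlonglongrightarrow> 0)"

end

theory Submission
  imports Defs
begin

text \<open>Limits in probability are unique up to null sets, which gives the statements about
  the ISU decompositions and their average. Along a partition, the ceteris paribus effect of
  factor i is exactly the SU component of any update order that updates i first, since that
  factor sees all others still at the left end point of each interval; hence the OAT effects
  have the same limits D i. For the identity order the SU components telescope to
  R(t) - R(0), so the OAT interaction effect is a difference of two sums with the common limit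
  \<Sum>i. D i and tends to zero.\<close>

lemma conv_in_prob_add:
  assumes "prob_space M"
    and Y: "\<And>n. Y n \<in> borel_measurable M" and Y': "\<And>n. Y' n \<in> borel_measurable M"
    and conv: "conv_in_prob M Y Z" and conv': "conv_in_prob M Y' Z'"
  shows "conv_in_prob M (\<lambda>n \<omega>. Y n \<omega> + Y' n \<omega>) (\<lambda>\<omega>. Z \<omega> + Z' \<omega>)"
proof -
  interpret prob_space M by fact
  have Z: "Z \<in> borel_measurable M" "Z' \<in> borel_measurable M"
    using conv conv' by (auto simp: conv_in_prob_def)
  show ?thesis unfolding conv_in_prob_def
  proof (intro conjI allI impI)
    show "(\<lambda>\<omega>. Z \<omega> + Z' \<omega>) \<in> borel_measurable M" using Z by simp
    fix e :: real assume "0 < e"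
    define A where "A n = {\<omega> \<in> space M. e < \<bar>Y n \<omega> + Y' n \<omega> - (Z \<omega> + Z' \<omega>)\<bar>}" for n
    define B where "B n = {\<omega> \<in> space M. e/2 < \<bar>Y n \<omega> - Z \<omega>\<bar>}" for n
    define B' where "B' n = {\<omega> \<in> space M. e/2 < \<bar>Y' n \<omega> - Z' \<omega>\<bar>}" for n
    have sets: "A n \<in> sets M" "B n \<in> sets M" "B' n \<in> sets M" for n
      unfolding A_def B_def B'_def using Y Y' Z by measurable
    have cover: "A n \<subseteq> B n \<union> B' n" for n
    proof
      fix \<omega> assume "\<omega> \<in> A n"
      then have "\<omega> \<in> space M" "e < \<bar>Y n \<omega> + Y' n \<omega> - (Z \<omega> + Z' \<omega>)\<bar>"
        unfolding A_def by auto
      moreover have "e/2 < \<bar>Y n \<omega> - Z \<omega>\<bar> \<or> e/2 < \<bar>Y' n \<omega> - Z' \<omega>\<bar>"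
        using calculation(2) abs_diff_triangle_ineq[of "Y n \<omega>" "Y' n \<omega>" "Z \<omega>" "Z' \<omega>"] by linarith
      ultimately show "\<omega> \<in> B n \<union> B' n"
        unfolding B_def B'_def by blast
    qed
    have bound: "measure M (A n) \<le> measure M (B n) + measure M (B' n)" for n
    proof -
      have "measure M (A n) \<le> measure M (B n \<union> B' n)"
        using cover sets by (intro finite_measure_mono) auto
      also have "\<dots> \<le> measure M (B n) + measure M (B' n)"
        using sets by (intro measure_subadditive) auto
      finally show ?thesis .
    qed
    have "(\<lambda>n. measure M (B n) + measure M (B' n)) \<longlonglongrightarrow> 0"
      using conv conv' \<open>0 < e\<close> unfolding conv_in_prob_def B_def B'_def
      by (intro tendsto_add_zero; meson half_gt_zero)
    then have "(\<lambda>n. measure M (A n)) \<longlonglongrightarrow> 0"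
      by (rule tendsto_sandwich[OF _ _ tendsto_const, rotated 2]) (simp_all add: bound)
    then show "(\<lambda>n. measure M {\<omega> \<in> space M. e < \<bar>Y n \<omega> + Y' n \<omega> - (Z \<omega> + Z' \<omega>)\<bar>}) \<longlonglongrightarrow> 0"
      unfolding A_def .
  qed
qed

lemma conv_in_prob_uminus:
  assumes "conv_in_prob M Y Z"
  shows "conv_in_prob M (\<lambda>n \<omega>. - Y n \<omega>) (\<lambda>\<omega>. - Z \<omega>)"
  using assms unfolding conv_in_prob_def by (simp add: abs_minus_commute)

lemma conv_in_prob_diff:
  assumes "prob_space M"
    and "\<And>n. Y n \<in> borel_measurable M" and "\<And>n. Y' n \<in> borel_measurable M"
    and "conv_in_prob M Y Z" and "conv_in_prob M Y' Z'"
  shows "conv_in_prob M (\<lambda>n \<omega>. Y n \<omega> - Y' n \<omega>) (\<lambda>\<omega>. Z \<omega> - Z' \<omega>)"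
  using conv_in_prob_add[OF assms(1,2) borel_measurable_uminus[OF assms(3)] assms(4)
      conv_in_prob_uminus[OF assms(5)]]
  by simp

lemma conv_in_prob_sum:
  assumes "prob_space M" and "finite S"
    and "\<And>i n. i \<in> S \<Longrightarrow> Y i n \<in> borel_measurable M"
    and "\<And>i. i \<in> S \<Longrightarrow> conv_in_prob M (Y i) (Z i)"
  shows "conv_in_prob M (\<lambda>n \<omega>. \<Sum>i\<in>S. Y i n \<omega>) (\<lambda>\<omega>. \<Sum>i\<in>S. Z i \<omega>)"
  using assms(2-)
proof (induction S rule: finite_induct)
  case empty
  then show ?case by (simp add: conv_in_prob_def)
next
  case (insert x S)
  have "conv_in_prob M (\<lambda>n \<omega>. Y x n \<omega> + (\<Sum>i\<in>S. Y i n \<omega>)) (\<lambda>\<omega>. Z x \<omega> + (\<Sum>i\<in>S. Z i \<omega>))"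
  proof (rule conv_in_prob_add[OF assms(1)])
    show "Y x n \<in> borel_measurable M" "(\<lambda>\<omega>. \<Sum>i\<in>S. Y i n \<omega>) \<in> borel_measurable M" for n
      using insert.prems(1) by auto
    show "conv_in_prob M (Y x) (Z x)" using insert.prems(2) by simp
    show "conv_in_prob M (\<lambda>n \<omega>. \<Sum>i\<in>S. Y i n \<omega>) (\<lambda>\<omega>. \<Sum>i\<in>S. Z i \<omega>)"
      using insert.prems by (intro insert.IH) auto
  qed
  then show ?case by (simp add: insert.hyps)
qed

lemma conv_in_prob_const_AE_eq:
  assumes "prob_space M" and W: "W \<in> borel_measurable M"
    and conv: "conv_in_prob M (\<lambda>_. W) Z"
  shows "AE \<omega> in M. W \<omega> = Z \<omega>"
proof -
  interpret prob_space M by fact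
  have Z: "Z \<in> borel_measurable M" using conv by (simp add: conv_in_prob_def)
  define N where "N k = {\<omega> \<in> space M. 1 / real (Suc k) < \<bar>W \<omega> - Z \<omega>\<bar>}" for k
  have "N k \<in> null_sets M" for k
  proof -
    have "N k \<in> sets M" unfolding N_def using W Z by measurable
    moreover have "(\<lambda>_. measure M (N k)) \<longlonglongrightarrow> 0"
      using conv unfolding conv_in_prob_def N_def by simp
    then have "measure M (N k) = 0" by (rule LIMSEQ_const_iff[THEN iffD1])
    ultimately show ?thesis by (simp add: emeasure_eq_measure null_sets_def)
  qed
  then have "(\<Union>k. N k) \<in> null_sets M" by (rule null_sets_UN)
  moreover have "{\<omega> \<in> space M. W \<omega> \<noteq> Z \<omega>} \<subseteq> (\<Union>k. N k)"
  proof
    fix \<omega> assume "\<omega> \<in> {\<omega> \<in> space M. W \<omega> \<noteq> Z \<omega>}"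
    then have "\<omega> \<in> space M" "0 < \<bar>W \<omega> - Z \<omega>\<bar>" by auto
    moreover obtain k where "inverse (real (Suc k)) < \<bar>W \<omega> - Z \<omega>\<bar>"
      using reals_Archimedean[OF \<open>0 < \<bar>W \<omega> - Z \<omega>\<bar>\<close>] by blast
    ultimately show "\<omega> \<in> (\<Union>k. N k)" unfolding N_def by (auto simp: inverse_eq_divide)
  qed
  ultimately show ?thesis by (rule AE_I')
qed

lemma conv_in_prob_unique:
  assumes "prob_space M" and "\<And>n. Y n \<in> borel_measurable M"
    and "conv_in_prob M Y Z" and "conv_in_prob M Y Z'"
  shows "AE \<omega> in M. Z \<omega> = Z' \<omega>"
proof -
  have "conv_in_prob M (\<lambda>n \<omega>. Y n \<omega> - Y n \<omega>) (\<lambda>\<omega>. Z \<omega> - Z' \<omega>)"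
    using assms by (intro conv_in_prob_diff)
  then have "conv_in_prob M (\<lambda>_ _. 0) (\<lambda>\<omega>. Z \<omega> - Z' \<omega>)"
    by simp
  then have "AE \<omega> in M. 0 = Z \<omega> - Z' \<omega>"
    by (rule conv_in_prob_const_AE_eq[OF assms(1) borel_measurable_const])
  then show ?thesis by auto
qed

lemma AE_average_eq:
  assumes "finite S" and "S \<noteq> {}" and "\<And>s. s \<in> S \<Longrightarrow> AE \<omega> in M. f s \<omega> = g \<omega>"
  shows "AE \<omega> in M. (1 / card S) * (\<Sum>s\<in>S. f s \<omega>) = (g \<omega> :: real)"
proof -
  have "AE \<omega> in M. \<forall>s\<in>S. f s \<omega> = g \<omega>"
    using assms by (intro AE_finite_allI) auto
  then show ?thesis
    by eventually_elim (use assms in simp)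
qed

lemma AE_average_over_permutations:
  assumes "finite S" and "\<And>\<pi>. \<pi> permutes S \<Longrightarrow> AE \<omega> in M. f \<pi> \<omega> = g \<omega>"
  shows "AE \<omega> in M. (1 / fact (card S)) * (\<Sum>\<pi>\<in>{\<pi>. \<pi> permutes S}. f \<pi> \<omega>) = (g \<omega> :: real)"
proof -
  have permutations: "finite {\<pi>. \<pi> permutes S}" "{\<pi>. \<pi> permutes S} \<noteq> {}"
    using \<open>finite S\<close> by (auto simp: finite_permutations intro: permutes_id)
  have "AE \<omega> in M. (1 / real (card {\<pi>. \<pi> permutes S})) * (\<Sum>\<pi>\<in>{\<pi>. \<pi> permutes S}. f \<pi> \<omega>) = g \<omega>"
    by (rule AE_average_eq[OF permutations]) (use assms(2) in simp)
  then show ?thesis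
    by (simp only: card_permutations[OF refl \<open>finite S\<close>] of_nat_fact)
qed

lemma is_partition_nonneg:
  assumes "is_partition t K p" and "l \<le> K"
  shows "0 \<le> p l"
  using assms(2)
proof (induction l)
  case 0
  then show ?case using assms(1) by (simp add: is_partition_def)
next
  case (Suc l)
  then have "0 \<le> p l" "p l < p (Suc l)" using assms(1) by (auto simp: is_partition_def)
  then show ?case by simp
qed

lemma surface_cong:
  assumes "\<And>j. j \<in> {1..m} \<Longrightarrow> s j = s' j"
  shows "surface \<rho> m X s = surface \<rho> m X s'"
  unfolding surface_def by (rule arg_cong[where f = \<rho>]) (auto simp: assms)

lemma surface_borel_measurable_partition_grid:
  assumes meas: "\<And>s. (\<forall>j. 0 \<le> s j) \<Longrightarrow> surface \<rho> m X s \<in> borel_measurable M"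
    and "is_partition t K p" and "l < K" and "\<And>j. s j = p l \<or> s j = p (Suc l)"
  shows "surface \<rho> m X s \<in> borel_measurable M"
proof (rule meas, intro allI)
  fix j
  have "0 \<le> p l" "0 \<le> p (Suc l)"
    using is_partition_nonneg[OF assms(2)] \<open>l < K\<close> by simp_all
  then show "0 \<le> s j" using assms(4)[of j] by auto
qed

lemma SU_borel_measurable:
  assumes "\<And>s. (\<forall>j. 0 \<le> s j) \<Longrightarrow> surface \<rho> m X s \<in> borel_measurable M"
    and "is_partition t K p"
  shows "SU \<rho> m X \<pi> K p k \<in> borel_measurable M"
  unfolding SU_def using surface_borel_measurable_partition_grid[OF assms]
  by (intro borel_measurable_sum borel_measurable_diff) (auto simp: upd_vec_def)

lemma OAT_borel_measurable:
  assumes "\<And>s. (\<forall>j. 0 \<le> s j) \<Longrightarrow> surface \<rho> m X s \<in> borel_measurable M"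
    and "is_partition t K p"
  shows "OAT \<rho> m X K p i \<in> borel_measurable M"
  unfolding OAT_def using surface_borel_measurable_partition_grid[OF assms]
  by (intro borel_measurable_sum borel_measurable_diff) auto

lemma OAT_eq_SU_first_update:
  assumes \<pi>: "\<pi> permutes {1..m}" and "\<pi> i = 1"
  shows "OAT \<rho> m X K p i = SU \<rho> m X \<pi> K p 1"
proof -
  have "upd_vec \<pi> a b 1 j = (if j = i then b else a)" "upd_vec \<pi> a b 0 j = a"
    if "j \<in> {1..m}" for j a b
  proof -
    have "\<pi> j \<in> {1..m}" using that permutes_in_image[OF \<pi>] by blast
    moreover have "\<pi> j = 1 \<longleftrightarrow> j = i"
      using permutes_inj[OF \<pi>] \<open>\<pi> i = 1\<close> by (metis injD)
    ultimately show "upd_vec \<pi> a b 1 j = (if j = i then b else a)" "upd_vec \<pi> a b 0 j = a"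
      unfolding upd_vec_def by auto
  qed
  then have
    "surface \<rho> m X (upd_vec \<pi> (p l) (p (Suc l)) 1) = surface \<rho> m X (\<lambda>j. if j = i then p (Suc l) else p l)"
    "surface \<rho> m X (upd_vec \<pi> (p l) (p (Suc l)) 0) = surface \<rho> m X (\<lambda>j. p l)" for l
    by (auto intro!: surface_cong)
  then show ?thesis unfolding OAT_def SU_def by simp
qed

lemma sum_SU_id_eq_R_diff:
  assumes "is_partition t K p"
  shows "(\<Sum>k\<in>{1..m}. SU \<rho> m X id K p k \<omega>) = R_proc \<rho> m X t \<omega> - R_proc \<rho> m X 0 \<omega>"
proof -
  have "(\<Sum>k\<in>{1..m}. SU \<rho> m X id K p k \<omega>) =
      (\<Sum>l<K. \<Sum>k\<in>{1..m}. surface \<rho> m X (upd_vec id (p l) (p (Suc l)) k) \<omega>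
        - surface \<rho> m X (upd_vec id (p l) (p (Suc l)) (k - 1)) \<omega>)"
    unfolding SU_def by (rule sum.swap)
  also have "\<dots> = (\<Sum>l<K. surface \<rho> m X (upd_vec id (p l) (p (Suc l)) m) \<omega>
        - surface \<rho> m X (upd_vec id (p l) (p (Suc l)) 0) \<omega>)"
    by (intro sum.cong refl sum_telescope''[of 0, unfolded One_nat_def[symmetric]]) simp
  also have "\<dots> = (\<Sum>l<K. surface \<rho> m X (\<lambda>_. p (Suc l)) \<omega> - surface \<rho> m X (\<lambda>_. p l) \<omega>)"
  proof -
    have "surface \<rho> m X (upd_vec id a b m) = surface \<rho> m X (\<lambda>_. b)"
      "surface \<rho> m X (upd_vec id a b 0) = surface \<rho> m X (\<lambda>_. a)" for a b
      by (auto intro!: surface_cong simp: upd_vec_def)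
    then show ?thesis by (simp only:)
  qed
  also have "\<dots> = surface \<rho> m X (\<lambda>_. p K) \<omega> - surface \<rho> m X (\<lambda>_. p 0) \<omega>"
    by (rule sum_lessThan_telescope)
  finally show ?thesis
    using assms by (simp add: is_partition_def R_proc_def)
qed

lemma OAT_conv_in_prob:
  assumes ISU: "\<And>\<pi> i. \<pi> permutes {1..m} \<Longrightarrow> i \<in> {1..m} \<Longrightarrow>
      conv_in_prob M (\<lambda>n. SU \<rho> m X \<pi> (K n) (T n) (\<pi> i)) (D i)"
    and "i \<in> {1..m}"
  shows "conv_in_prob M (\<lambda>n. OAT \<rho> m X (K n) (T n) i) (D i)"
proof -
  define \<pi> where "\<pi> = Transposition.transpose i 1"
  have \<pi>: "\<pi> permutes {1..m}"
    unfolding \<pi>_def using \<open>i \<in> {1..m}\<close> by (intro permutes_swap_id) auto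
  have "\<pi> i = 1" unfolding \<pi>_def by simp
  then have "OAT \<rho> m X (K n) (T n) i = SU \<rho> m X \<pi> (K n) (T n) (\<pi> i)" for n
    using OAT_eq_SU_first_update[OF \<pi>] by simp
  then show ?thesis using ISU[OF \<pi> \<open>i \<in> {1..m}\<close>] by simp
qed

lemma OAT_interaction_conv_in_prob_zero:
  assumes "prob_space M"
    and meas: "\<And>s. (\<forall>j. 0 \<le> s j) \<Longrightarrow> surface \<rho> m X s \<in> borel_measurable M"
    and part: "\<And>n. is_partition t (K n) (T n)"
    and SU: "\<And>k. k \<in> {1..m} \<Longrightarrow> conv_in_prob M (\<lambda>n. SU \<rho> m X id (K n) (T n) k) (D k)"
    and OAT: "\<And>k. k \<in> {1..m} \<Longrightarrow> conv_in_prob M (\<lambda>n. OAT \<rho> m X (K n) (T n) k) (D k)"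
  shows "conv_in_prob M (\<lambda>n. OAT_interaction \<rho> m X t (K n) (T n)) (\<lambda>\<omega>. 0)"
proof -
  have "conv_in_prob M
      (\<lambda>n \<omega>. (\<Sum>k\<in>{1..m}. SU \<rho> m X id (K n) (T n) k \<omega>) - (\<Sum>k\<in>{1..m}. OAT \<rho> m X (K n) (T n) k \<omega>))
      (\<lambda>\<omega>. (\<Sum>k\<in>{1..m}. D k \<omega>) - (\<Sum>k\<in>{1..m}. D k \<omega>))"
  proof (rule conv_in_prob_diff[OF assms(1)])
    show "conv_in_prob M (\<lambda>n \<omega>. \<Sum>k\<in>{1..m}. SU \<rho> m X id (K n) (T n) k \<omega>) (\<lambda>\<omega>. \<Sum>k\<in>{1..m}. D k \<omega>)"
      using SU SU_borel_measurable[OF meas part] by (intro conv_in_prob_sum[OF assms(1)]) auto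
    show "conv_in_prob M (\<lambda>n \<omega>. \<Sum>k\<in>{1..m}. OAT \<rho> m X (K n) (T n) k \<omega>) (\<lambda>\<omega>. \<Sum>k\<in>{1..m}. D k \<omega>)"
      using OAT OAT_borel_measurable[OF meas part] by (intro conv_in_prob_sum[OF assms(1)]) auto
  qed (use SU_borel_measurable[OF meas part] OAT_borel_measurable[OF meas part] in auto)
  moreover have "OAT_interaction \<rho> m X t (K n) (T n) = (\<lambda>\<omega>.
      (\<Sum>k\<in>{1..m}. SU \<rho> m X id (K n) (T n) k \<omega>) - (\<Sum>k\<in>{1..m}. OAT \<rho> m X (K n) (T n) k \<omega>))" for n
    by (simp only: OAT_interaction_def sum_SU_id_eq_R_diff[OF part])
  ultimately show ?thesis by simp
qed

theorem theorem7p3: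
  fixes M :: "'a measure" and F :: "real \<Rightarrow> 'a measure"
    and X :: "nat \<Rightarrow> real \<Rightarrow> 'a \<Rightarrow> real"
    and \<rho> :: "(nat \<Rightarrow> real \<Rightarrow> 'a \<Rightarrow> real) \<Rightarrow> 'a \<Rightarrow> real"
    and m :: nat and t :: real
    and K :: "nat \<Rightarrow> nat" and T :: "nat \<Rightarrow> nat \<Rightarrow> real"
    and D :: "nat \<Rightarrow> 'a \<Rightarrow> real"
  assumes "complete_prob_space M"
    and "rc_complete_filtration M F"
    and "adapted F m X"
    and meas: "\<And>s. (\<forall>j. 0 \<le> s j) \<Longrightarrow> surface \<rho> m X s \<in> borel_measurable M"
    and "0 \<le> t"
    and part: "\<And>n. is_partition t (K n) (T n)"
    and mesh: "(\<lambda>n. mesh (K n) (T n)) \<longlonglongrightarrow> 0"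
    and indep: "\<And>\<pi> i. \<pi> permutes {1..m} \<Longrightarrow> i \<in> {1..m} \<Longrightarrow>
                   conv_in_prob M (\<lambda>n. SU \<rho> m X \<pi> (K n) (T n) (\<pi> i)) (D i)"
  shows "(\<forall>Dpi :: (nat \<Rightarrow> nat) \<Rightarrow> nat \<Rightarrow> 'a \<Rightarrow> real.
            (\<forall>\<pi>. \<pi> permutes {1..m} \<longrightarrow> (\<forall>k\<in>{1..m}.
               conv_in_prob M (\<lambda>n. SU \<rho> m X \<pi> (K n) (T n) k) (Dpi \<pi> k))) \<longrightarrow>
            (\<forall>\<pi>. \<pi> permutes {1..m} \<longrightarrow> (\<forall>i\<in>{1..m}.
               AE \<omega> in M. Dpi \<pi> (\<pi> i) \<omega> = D i \<omega>)) \<and>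
            (\<forall>i\<in>{1..m}. AE \<omega> in M.
               (1 / fact m) * (\<Sum>\<pi>\<in>{\<pi>. \<pi> permutes {1..m}}. Dpi \<pi> (\<pi> i) \<omega>) = D i \<omega>))
       \<and> (\<forall>i\<in>{1..m}. conv_in_prob M (\<lambda>n. OAT \<rho> m X (K n) (T n) i) (D i))
       \<and> conv_in_prob M (\<lambda>n. OAT_interaction \<rho> m X t (K n) (T n)) (\<lambda>\<omega>. 0)"
proof -
  have P: "prob_space M" using assms(1) by (simp add: complete_prob_space_def)
  have ISU_eq: "AE \<omega> in M. Dpi \<pi> (\<pi> i) \<omega> = D i \<omega>"
    if "\<forall>\<pi>. \<pi> permutes {1..m} \<longrightarrow> (\<forall>k\<in>{1..m}.
          conv_in_prob M (\<lambda>n. SU \<rho> m X \<pi> (K n) (T n) k) (Dpi \<pi> k))"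
      and "\<pi> permutes {1..m}" and "i \<in> {1..m}" for Dpi \<pi> i
    using that indep[OF that(2,3)] permutes_in_image[OF that(2)]
    by (intro conv_in_prob_unique[OF P SU_borel_measurable[OF meas part]]) auto
  have average: "AE \<omega> in M. (1 / fact m) * (\<Sum>\<pi>\<in>{\<pi>. \<pi> permutes {1..m}}. Dpi \<pi> (\<pi> i) \<omega>) = D i \<omega>"
    if "\<And>\<pi>. \<pi> permutes {1..m} \<Longrightarrow> AE \<omega> in M. Dpi \<pi> (\<pi> i) \<omega> = D i \<omega>"
    for Dpi :: "(nat \<Rightarrow> nat) \<Rightarrow> nat \<Rightarrow> 'a \<Rightarrow> real" and i
    using AE_average_over_permutations[where S="{1..m}" and f="\<lambda>\<pi>. Dpi \<pi> (\<pi> i)"] that by simp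
  note OAT = OAT_conv_in_prob[OF indep]
  have "conv_in_prob M (\<lambda>n. OAT_interaction \<rho> m X t (K n) (T n)) (\<lambda>\<omega>. 0)"
    using indep[OF permutes_id] OAT by (intro OAT_interaction_conv_in_prob_zero[OF P meas part]) auto
  with ISU_eq average OAT show ?thesis by blast
qed

end
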